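(* Let $\mathcal A$ and $\mathcal B$ be complete NFAs over the same finite alphabet $\Sigma$. Then $\mathcal L(\mathcal B)\subseteq\mathcal L(\mathcal A)$ if and only if $\mathcal L(\mathcal B_f)\subseteq\mathcal L(\mathcal A_f)$, where $\mathcal A_f,\mathcal B_f$ are the NBWs obtained by the construction below.
   Context: An NFA $\mathcal A=(\Sigma,Q,q_0,\delta,F)$ (with $\delta:Q\times\Sigma\to 2^Q$) is complete if $\delta(q,\sigma)\neq\emptyset$ for all $q,\sigma$; $\mathcal L(\mathcal A)\subseteq\Sigma^*$ is its language of finite words. An NBW is the same kind of tuple read on infinite words, accepting a word if some run visits a final state infinitely often. For a complete NFA $\mathcal A=(\Sigma,Q,q_0,\delta,F)$, the NBW $\mathcal A_f=(\Sigma_\$,Q\cup\{f\},q_0,\delta_f,\{f\})$ is defined with a fresh letter $\$\notin\Sigma$, $\Sigma_\$=\Sigma\cup\{\$\}$, a fresh state $f\notin Q$, and: $\delta_f(q,\sigma)=\delta(q,\sigma)$ for $q\in Q,\sigma\in\Sigma$; $\delta_f(q,\$)=\{f\}$ for $q\in F$; $\delta_f(q,\$)=\{q_0\}$ for $q\in Q\setminus F$; and $\delta_f(f,\sigma)=\delta_f(q_0,\sigma)$ for all $\sigma\in\Sigma_\$$. *)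

theory Defs
  imports Main
begin

record ('a, 'q) automaton =
  alphabet :: "'a set"
  states   :: "'q set"
  init     :: "'q"
  trans    :: "'q \<Rightarrow> 'a \<Rightarrow> 'q set"
  final    :: "'q set"

definition wf_automaton :: "('a, 'q) automaton \<Rightarrow> bool" where
  "wf_automaton A \<longleftrightarrow>
     finite (alphabet A) \<and> finite (states A) \<and> init A \<in> states A \<and>
     final A \<subseteq> states A \<and>
     (\<forall>q \<in> states A. \<forall>a \<in> alphabet A. trans A q a \<subseteq> states A)"

definition complete :: "('a, 'q) automaton \<Rightarrow> bool" where
  "complete A \<longleftrightarrow> (\<forall>q \<in> states A. \<forall>a \<in> alphabet A. trans A q a \<noteq> {})"

fun reach :: "('q \<Rightarrow> 'a \<Rightarrow> 'q set) \<Rightarrow> 'q set \<Rightarrow> 'a list \<Rightarrow> 'q set" where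
  "reach d S [] = S"
| "reach d S (a # w) = reach d (\<Union>q\<in>S. d q a) w"

definition nfa_lang :: "('a, 'q) automaton \<Rightarrow> 'a list set" where
  "nfa_lang A = {w. set w \<subseteq> alphabet A \<and> reach (trans A) {init A} w \<inter> final A \<noteq> {}}"

definition nbw_lang :: "('a, 'q) automaton \<Rightarrow> (nat \<Rightarrow> 'a) set" where
  "nbw_lang A = {w. (\<forall>i. w i \<in> alphabet A) \<and>
      (\<exists>r. r 0 = init A \<and> (\<forall>i. r (Suc i) \<in> trans A (r i) (w i)) \<and>
           (\<exists>\<^sub>\<infinity> i. r i \<in> final A))}"

text \<open>The construction A_f. The letter \$ is None, letters of Sigma are Some a;
  the fresh state f is None, states of Q are Some q.\<close>
fun trans_fQ :: "('a, 'q) automaton \<Rightarrow> 'q \<Rightarrow> 'a option \<Rightarrow> 'q option set" where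
  "trans_fQ A q (Some a) = Some ` trans A q a"
| "trans_fQ A q None = (if q \<in> final A then {None} else {Some (init A)})"

fun trans_f :: "('a, 'q) automaton \<Rightarrow> 'q option \<Rightarrow> 'a option \<Rightarrow> 'q option set" where
  "trans_f A (Some q) x = trans_fQ A q x"
| "trans_f A None x = trans_fQ A (init A) x"

definition dollar_nbw :: "('a, 'q) automaton \<Rightarrow> ('a option, 'q option) automaton" where
  "dollar_nbw A = \<lparr> alphabet = insert None (Some ` alphabet A),
                    states = insert None (Some ` states A),
                    init = Some (init A),
                    trans = trans_f A,
                    final = {None} \<rparr>"

end

theory Submission
  imports Defs "HOL-Library.Infinite_Set"
begin

text \<open>After every \$ a run of \<open>\<A>\<^sub>f\<close> is in \<open>q\<^sub>0\<close> or in \<open>f\<close>, which behaves like \<open>q\<^sub>0\<close>,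
  and it enters \<open>f\<close> exactly when it has just read a \$-free block from \<open>q\<^sub>0\<close> into \<open>F\<close>.
  Hence \<open>\<A>\<^sub>f\<close> accepts a word iff infinitely many of its \$-terminated blocks lie in
  \<open>\<L>(\<A>)\<close>: an accepting run follows an accepting run of \<open>\<A>\<close> through each such block,
  and completeness lets it cross the other blocks. This characterisation is monotone in
  \<open>\<L>(\<A>)\<close>, which gives one direction; for the other, \<open>u \<in> \<L>(\<B>)\<close> yields
  \<open>(u\$)\<^sup>\<omega> \<in> \<L>(\<B>\<^sub>f) \<subseteq> \<L>(\<A>\<^sub>f)\<close>, all of whose blocks are \<open>u\<close>.\<close>

lemma INFM_Suc_iff: "(\<exists>\<^sub>\<infinity>n. P (Suc n)) \<longleftrightarrow> (\<exists>\<^sub>\<infinity>n. P n)"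
  using MOST_Suc_iff[of "\<lambda>n. \<not> P n"] by (simp only: frequently_def)

definition base_state :: "('a, 'q) automaton \<Rightarrow> 'q option \<Rightarrow> 'q" where
  "base_state X x = (case x of None \<Rightarrow> init X | Some q \<Rightarrow> q)"

lemma trans_f_Some: "trans_f X x (Some a) = Some ` trans X (base_state X x) a"
  by (cases x) (auto simp: base_state_def)

lemma trans_f_None:
  "trans_f X x None = (if base_state X x \<in> final X then {None} else {Some (init X)})"
  by (cases x) (auto simp: base_state_def)

lemma base_state_after_dollar: "y \<in> trans_f X x None \<Longrightarrow> base_state X y = init X"
  by (auto simp: trans_f_None base_state_def split: if_splits)

lemma enter_f_after_final:
  assumes "y \<in> trans_f X x c" and "y = None"
  shows "c = None \<and> base_state X x \<in> final X"
  using assms by (cases c) (auto simp: trans_f_Some trans_f_None split: if_splits)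

lemma nbw_lang_dollar_nbw:
  "w \<in> nbw_lang (dollar_nbw X) \<longleftrightarrow>
     (\<forall>i. w i \<in> insert None (Some ` alphabet X)) \<and>
     (\<exists>r. r 0 = Some (init X) \<and> (\<forall>i. r (Suc i) \<in> trans_f X (r i) (w i)) \<and>
          (\<exists>\<^sub>\<infinity> i. r i = None))"
  by (simp add: nbw_lang_def dollar_nbw_def)

lemma reach_append [simp]: "reach d S (u @ v) = reach d (reach d S u) v"
  by (induction u arbitrary: S) simp_all

primrec segment_before :: "(nat \<Rightarrow> 'a option) \<Rightarrow> nat \<Rightarrow> 'a list" where
  "segment_before w 0 = []"
| "segment_before w (Suc i) = (case w i of None \<Rightarrow> [] | Some a \<Rightarrow> segment_before w i @ [a])"

lemma length_segment_before_le: "length (segment_before w j) \<le> j"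
  by (induction j) (auto split: option.split)

lemma set_segment_before_subset:
  assumes "\<forall>i. w i \<in> insert None (Some ` \<Sigma>)"
  shows "set (segment_before w j) \<subseteq> \<Sigma>"
proof (induction j)
  case (Suc j)
  with assms[rule_format, of j] show ?case by (auto split: option.split)
qed simp

inductive accepts_block :: "('q \<Rightarrow> 'a \<Rightarrow> 'q set) \<Rightarrow> 'q set \<Rightarrow> (nat \<Rightarrow> 'a option) \<Rightarrow> nat \<Rightarrow> 'q \<Rightarrow> bool"
  for d F w where
  accepts_block_dollar: "w i = None \<Longrightarrow> q \<in> F \<Longrightarrow> accepts_block d F w i q"
| accepts_block_letter: "w i = Some a \<Longrightarrow> q' \<in> d q a \<Longrightarrow> accepts_block d F w (Suc i) q' \<Longrightarrow>
    accepts_block d F w i q"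

lemma accepts_block_dollarD: "accepts_block d F w i q \<Longrightarrow> w i = None \<Longrightarrow> q \<in> F"
  by (erule accepts_block.cases) auto

lemma accepts_block_letterD:
  "accepts_block d F w i q \<Longrightarrow> w i = Some a \<Longrightarrow> \<exists>q'\<in>d q a. accepts_block d F w (Suc i) q'"
  by (erule accepts_block.cases) auto

lemma accepts_block_of_segment:
  "p \<in> reach d {q} (segment_before w j) \<Longrightarrow> accepts_block d F w j p \<Longrightarrow>
    accepts_block d F w (j - length (segment_before w j)) q"
proof (induction j arbitrary: p)
  case 0
  then show ?case by simp
next
  case (Suc j)
  show ?case
  proof (cases "w j")
    case None
    with Suc.prems show ?thesis by simp
  next
    case (Some a)
    with Suc.prems obtain p' where p': "p' \<in> reach d {q} (segment_before w j)" "p \<in> d p' a"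
      by auto
    from Some p'(2) Suc.prems(2) have "accepts_block d F w j p'"
      by (rule accepts_block_letter)
    with p'(1) have "accepts_block d F w (j - length (segment_before w j)) q"
      by (rule Suc.IH)
    with Some length_segment_before_le[of w j] show ?thesis
      by (simp add: Suc_diff_le)
  qed
qed

lemma run_state_in_reach:
  assumes "r 0 = Some (init X)" and "\<forall>i. r (Suc i) \<in> trans_f X (r i) (w i)"
  shows "base_state X (r j) \<in> reach (trans X) {init X} (segment_before w j)"
proof (induction j)
  case 0
  with assms(1) show ?case by (simp add: base_state_def)
next
  case (Suc j)
  have step: "r (Suc j) \<in> trans_f X (r j) (w j)" using assms(2) by blast
  show ?case
  proof (cases "w j")
    case None
    with step show ?thesis by (simp add: base_state_after_dollar)
  next
    case (Some a)
    with step Suc.IH show ?thesis by (auto simp: trans_f_Some base_state_def)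
  qed
qed

lemma run_follows_accepted_block:
  assumes "r 0 = Some (init X)" and "\<forall>i. r (Suc i) \<in> trans_f X (r i) (w i)"
    and keep: "\<forall>i. accepts_block (trans X) (final X) w i (base_state X (r i)) \<and> w i \<noteq> None \<longrightarrow>
        accepts_block (trans X) (final X) w (Suc i) (base_state X (r (Suc i)))"
  shows "accepts_block (trans X) (final X) w (j - length (segment_before w j)) (init X) \<Longrightarrow>
    accepts_block (trans X) (final X) w j (base_state X (r j))"
proof (induction j)
  case 0
  with assms(1) show ?case by (simp add: base_state_def)
next
  case (Suc j)
  show ?case
  proof (cases "w j")
    case None
    with Suc.prems assms(2)[rule_format, of j] show ?thesis by (simp add: base_state_after_dollar)
  next
    case (Some a)
    with Suc.prems length_segment_before_le[of w j]
    have "accepts_block (trans X) (final X) w j (base_state X (r j))"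
      by (intro Suc.IH) (simp add: Suc_diff_le)
    with Some keep show ?thesis by simp
  qed
qed

lemma dollar_nbw_step_keeping_block:
  assumes "complete X" and "wf_automaton X"
    and "w i \<in> insert None (Some ` alphabet X)" and "base_state X x \<in> states X"
  shows "\<exists>y. base_state X y \<in> states X \<and> y \<in> trans_f X x (w i) \<and>
    (accepts_block (trans X) (final X) w i (base_state X x) \<and> w i \<noteq> None \<longrightarrow>
       accepts_block (trans X) (final X) w (Suc i) (base_state X y))"
proof (cases "w i")
  case None
  have "init X \<in> states X" using assms(2) by (simp add: wf_automaton_def)
  with None show ?thesis
    by (intro exI[of _ "if base_state X x \<in> final X then None else Some (init X)"])
      (simp add: trans_f_None base_state_def)
next
  case (Some a)
  with assms(3) have a: "a \<in> alphabet X" by auto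
  let ?acc = "accepts_block (trans X) (final X) w"
  have "\<exists>q \<in> trans X (base_state X x) a. ?acc i (base_state X x) \<longrightarrow> ?acc (Suc i) q"
  proof (cases "?acc i (base_state X x)")
    case True
    then show ?thesis using accepts_block_letterD[of "trans X" "final X" w i "base_state X x" a] Some
      by blast
  next
    case False
    from assms(1,4) a obtain q where "q \<in> trans X (base_state X x) a"
      unfolding complete_def by blast
    with False show ?thesis by blast
  qed
  then obtain q where q: "q \<in> trans X (base_state X x) a"
    and "?acc i (base_state X x) \<longrightarrow> ?acc (Suc i) q" by blast
  moreover have "q \<in> states X"
    using q a assms(2,4) unfolding wf_automaton_def by blast
  ultimately show ?thesis using Some
    by (intro exI[of _ "Some q"]) (simp add: trans_f_Some base_state_def)
qed

lemma dollar_nbw_run_keeping_blocks: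
  assumes "wf_automaton X" and "complete X"
    and letters: "\<forall>i. w i \<in> insert None (Some ` alphabet X)"
  defines "acc \<equiv> accepts_block (trans X) (final X) w"
  shows "\<exists>r. r 0 = Some (init X) \<and> (\<forall>i. r (Suc i) \<in> trans_f X (r i) (w i)) \<and>
    (\<forall>i. acc i (base_state X (r i)) \<and> w i \<noteq> None \<longrightarrow> acc (Suc i) (base_state X (r (Suc i))))"
proof -
  have "\<exists>r. \<forall>n. (base_state X (r n) \<in> states X \<and> (n = 0 \<longrightarrow> r n = Some (init X))) \<and>
      (r (Suc n) \<in> trans_f X (r n) (w n) \<and>
       (acc n (base_state X (r n)) \<and> w n \<noteq> None \<longrightarrow> acc (Suc n) (base_state X (r (Suc n)))))"
  proof (rule dependent_nat_choice)
    show "\<exists>x. base_state X x \<in> states X \<and> (0 = 0 \<longrightarrow> x = Some (init X))"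
      using assms(1) by (simp add: base_state_def wf_automaton_def)
  next
    fix x and n :: nat
    assume "base_state X x \<in> states X \<and> (n = 0 \<longrightarrow> x = Some (init X))"
    then show "\<exists>y. (base_state X y \<in> states X \<and> (Suc n = 0 \<longrightarrow> y = Some (init X))) \<and>
        y \<in> trans_f X x (w n) \<and>
        (acc n (base_state X x) \<and> w n \<noteq> None \<longrightarrow> acc (Suc n) (base_state X y))"
      using dollar_nbw_step_keeping_block[of X w n x] assms(1,2) letters unfolding acc_def by simp
  qed
  then obtain r where r: "\<And>n. (base_state X (r n) \<in> states X \<and> (n = 0 \<longrightarrow> r n = Some (init X))) \<and>
      (r (Suc n) \<in> trans_f X (r n) (w n) \<and>
       (acc n (base_state X (r n)) \<and> w n \<noteq> None \<longrightarrow> acc (Suc n) (base_state X (r (Suc n)))))"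
    by blast
  have "r 0 = Some (init X)" using r[of 0] by simp
  with r show ?thesis by blast
qed

theorem nbw_lang_dollar_nbw_iff:
  assumes "wf_automaton X" and "complete X"
  shows "w \<in> nbw_lang (dollar_nbw X) \<longleftrightarrow>
    (\<forall>i. w i \<in> insert None (Some ` alphabet X)) \<and>
    (\<exists>\<^sub>\<infinity> i. w i = None \<and> segment_before w i \<in> nfa_lang X)"
    (is "_ \<longleftrightarrow> ?letters \<and> ?blocks")
proof
  assume "w \<in> nbw_lang (dollar_nbw X)"
  then obtain r where letters: ?letters and r0: "r 0 = Some (init X)"
    and run: "\<forall>i. r (Suc i) \<in> trans_f X (r i) (w i)" and "\<exists>\<^sub>\<infinity> i. r i = None"
    unfolding nbw_lang_dollar_nbw by blast
  with INFM_Suc_iff[of "\<lambda>i. r i = None"] have "\<exists>\<^sub>\<infinity> i. r (Suc i) = None"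
    by simp
  then have ?blocks
  proof (rule frequently_elim1)
    fix i assume "r (Suc i) = None"
    then have "w i = None" and "base_state X (r i) \<in> final X"
      using enter_f_after_final[OF run[rule_format, of i]] by simp_all
    moreover have "set (segment_before w i) \<subseteq> alphabet X"
      using letters by (rule set_segment_before_subset)
    ultimately show "w i = None \<and> segment_before w i \<in> nfa_lang X"
      using run_state_in_reach[OF r0 run, of i] by (auto simp: nfa_lang_def)
  qed
  with letters show "?letters \<and> ?blocks" ..
next
  assume "?letters \<and> ?blocks"
  then have letters: ?letters and blocks: ?blocks by blast+
  let ?acc = "accepts_block (trans X) (final X) w"
  obtain r where r0: "r 0 = Some (init X)" and run: "\<forall>i. r (Suc i) \<in> trans_f X (r i) (w i)"
    and keep: "\<forall>i. ?acc i (base_state X (r i)) \<and> w i \<noteq> None \<longrightarrow>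
      ?acc (Suc i) (base_state X (r (Suc i)))"
    using dollar_nbw_run_keeping_blocks[OF assms letters] by blast
  from blocks have "\<exists>\<^sub>\<infinity> i. r (Suc i) = None"
  proof (rule frequently_elim1)
    fix i assume i: "w i = None \<and> segment_before w i \<in> nfa_lang X"
    then obtain p where p: "p \<in> reach (trans X) {init X} (segment_before w i)" "p \<in> final X"
      by (auto simp: nfa_lang_def)
    from i p(2) have "?acc i p" by (simp add: accepts_block_dollar)
    with p(1) have "?acc (i - length (segment_before w i)) (init X)"
      by (rule accepts_block_of_segment)
    then have "?acc i (base_state X (r i))"
      by (rule run_follows_accepted_block[OF r0 run keep])
    with i have "base_state X (r i) \<in> final X"
      by (simp add: accepts_block_dollarD)
    with i run[rule_format, of i] show "r (Suc i) = None"
      by (simp add: trans_f_None)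
  qed
  with INFM_Suc_iff[of "\<lambda>i. r i = None"] have "\<exists>\<^sub>\<infinity> i. r i = None"
    by simp
  with letters r0 run show "w \<in> nbw_lang (dollar_nbw X)"
    unfolding nbw_lang_dollar_nbw by blast
qed

definition dollar_cycle :: "'a list \<Rightarrow> nat \<Rightarrow> 'a option" where
  "dollar_cycle u i = (map Some u @ [None]) ! (i mod Suc (length u))"

lemma dollar_cycle_eq_None_iff: "dollar_cycle u i = None \<longleftrightarrow> i mod Suc (length u) = length u"
proof -
  have "i mod Suc (length u) < Suc (length u)" by simp
  then show ?thesis by (auto simp: dollar_cycle_def nth_append less_Suc_eq)
qed

lemma dollar_cycle_in_letters:
  assumes "set u \<subseteq> \<Sigma>"
  shows "dollar_cycle u i \<in> insert None (Some ` \<Sigma>)"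
proof (cases "i mod Suc (length u) < length u")
  case True
  with assms have "u ! (i mod Suc (length u)) \<in> \<Sigma>" by (meson nth_mem subsetD)
  with True show ?thesis by (simp add: dollar_cycle_def nth_append)
next
  case False
  then show ?thesis by (simp add: dollar_cycle_def nth_append)
qed

lemma frequently_dollar_cycle_eq_None: "\<exists>\<^sub>\<infinity> i. dollar_cycle u i = None"
  unfolding INFM_nat_le dollar_cycle_eq_None_iff
proof
  fix m
  have "(m * Suc (length u) + length u) mod Suc (length u) = length u"
    unfolding mod_mult_self3 by simp
  then show "\<exists>n\<ge>m. n mod Suc (length u) = length u"
    by (intro exI[of _ "m * Suc (length u) + length u"]) simp
qed

lemma segment_before_dollar_cycle:
  "segment_before (dollar_cycle u) i = take (i mod Suc (length u)) u"
proof (induction i)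
  case 0
  then show ?case by simp
next
  case (Suc i)
  show ?case
  proof (cases "i mod Suc (length u) = length u")
    case True
    then have "Suc i mod Suc (length u) = 0" by (metis mod_Suc)
    moreover have "dollar_cycle u i = None" using True by (simp add: dollar_cycle_eq_None_iff)
    ultimately show ?thesis by simp
  next
    case False
    then have lt: "i mod Suc (length u) < length u"
      using less_Suc_eq mod_less_divisor zero_less_Suc by metis
    then have "Suc i mod Suc (length u) = Suc (i mod Suc (length u))" by (simp add: mod_Suc)
    moreover have "dollar_cycle u i = Some (u ! (i mod Suc (length u)))"
      using lt by (simp add: dollar_cycle_def nth_append)
    ultimately show ?thesis using Suc.IH lt by (simp add: take_Suc_conv_app_nth)
  qed
qed

lemma dollar_cycle_in_nbw_lang_iff:
  assumes "wf_automaton X" and "complete X" and "set u \<subseteq> alphabet X"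
  shows "dollar_cycle u \<in> nbw_lang (dollar_nbw X) \<longleftrightarrow> u \<in> nfa_lang X"
proof -
  have block: "segment_before (dollar_cycle u) i = u" if "dollar_cycle u i = None" for i
    using that by (simp add: segment_before_dollar_cycle dollar_cycle_eq_None_iff)
  have letters: "\<forall>i. dollar_cycle u i \<in> insert None (Some ` alphabet X)"
    using assms(3) dollar_cycle_in_letters by blast
  have "dollar_cycle u \<in> nbw_lang (dollar_nbw X) \<longleftrightarrow>
      (\<exists>\<^sub>\<infinity> i. dollar_cycle u i = None \<and> u \<in> nfa_lang X)"
    using letters block by (simp add: nbw_lang_dollar_nbw_iff assms(1,2) cong: conj_cong)
  also have "\<dots> \<longleftrightarrow> u \<in> nfa_lang X"
    using frequently_dollar_cycle_eq_None[of u] by (cases "u \<in> nfa_lang X") simp_all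
  finally show ?thesis .
qed

lemma nbw_lang_dollar_nbw_mono:
  assumes "wf_automaton X" and "wf_automaton Y" and "complete X" and "complete Y"
    and "alphabet X = alphabet Y" and "nfa_lang Y \<subseteq> nfa_lang X"
  shows "nbw_lang (dollar_nbw Y) \<subseteq> nbw_lang (dollar_nbw X)"
proof
  fix w assume "w \<in> nbw_lang (dollar_nbw Y)"
  then have letters: "\<forall>i. w i \<in> insert None (Some ` alphabet Y)"
    and blocks: "\<exists>\<^sub>\<infinity> i. w i = None \<and> segment_before w i \<in> nfa_lang Y"
    by (simp_all add: nbw_lang_dollar_nbw_iff assms(2,4))
  from blocks have "\<exists>\<^sub>\<infinity> i. w i = None \<and> segment_before w i \<in> nfa_lang X"
    by (rule frequently_elim1) (use assms(6) in blast)
  with letters show "w \<in> nbw_lang (dollar_nbw X)"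
    by (simp add: nbw_lang_dollar_nbw_iff assms(1,3,5))
qed

theorem lemma5:
  fixes A :: "('a, 'q) automaton" and B :: "('a, 'p) automaton"
  assumes "wf_automaton A" and "wf_automaton B"
    and "complete A" and "complete B"
    and "alphabet A = alphabet B"
  shows "nfa_lang B \<subseteq> nfa_lang A \<longleftrightarrow> nbw_lang (dollar_nbw B) \<subseteq> nbw_lang (dollar_nbw A)"
proof
  assume "nfa_lang B \<subseteq> nfa_lang A"
  with assms show "nbw_lang (dollar_nbw B) \<subseteq> nbw_lang (dollar_nbw A)"
    by (rule nbw_lang_dollar_nbw_mono)
next
  assume sub: "nbw_lang (dollar_nbw B) \<subseteq> nbw_lang (dollar_nbw A)"
  show "nfa_lang B \<subseteq> nfa_lang A"
  proof
    fix u assume u: "u \<in> nfa_lang B"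
    then have letters: "set u \<subseteq> alphabet B" by (simp add: nfa_lang_def)
    with u assms(2,4) have "dollar_cycle u \<in> nbw_lang (dollar_nbw B)"
      by (simp add: dollar_cycle_in_nbw_lang_iff)
    with sub have "dollar_cycle u \<in> nbw_lang (dollar_nbw A)" ..
    with letters assms(1,3,5) show "u \<in> nfa_lang A"
      by (simp add: dollar_cycle_in_nbw_lang_iff)
  qed
qed

end
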